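(* Let $M$ be a quasianalytic intersectable weight sequence. Then: (i) $n_k^{1/k}\to\infty$ for all $N\in\mathcal{L}(M)$, where $n_k=N_k/k!$. (ii) If $M$ has moderate growth, then for every $N\in\mathcal{L}(M)$ there exists $N'\in\mathcal{L}(M)$ such that $\mathrm{mg}(N',N)<\infty$.
   Context: A weight sequence is a sequence $M=(M_k)_{k\ge0}$ of positive reals with $M_k=\mu_1\cdots\mu_k$, $M_0=1$, where $(\mu_k)$ is positive and increasing with $\mu_0=1$, and $M_k^{1/k}\to\infty$. $M$ is non-quasianalytic if $\sum_{k\ge1}1/\mu_k<\infty$, quasianalytic otherwise; it has moderate growth if $\exists C>0\ \forall j,k: M_{j+k}\le C^{j+k}M_jM_k$. $\Lambda^{\{M\}}:=\{(c_k)\in\mathbb{C}^{\mathbb{N}}:\exists\rho>0,\ \sup_k|c_k|/(\rho^kM_k)<\infty\}$; $\mathcal{L}(M)$ is the set of all non-quasianalytic weight sequences $N$ with $N_k\ge M_k$ for all $k$ and $(N_k/k!)_k$ log-convex. A quasianalytic weight sequence $M$ is intersectable if $\Lambda^{\{M\}}=\bigcap_{N\in\mathcal{L}(M)}\Lambda^{\{N\}}$. $\mathrm{mg}(M,N):=\sup_{j,k\ge0,j+k\ge1}(M_{j+k}/(N_jN_k))^{1/(j+k)}\in(0,\infty]$. *)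

theory Defs
  imports "HOL-Analysis.Analysis"
begin

definition weight_seq :: "(nat \<Rightarrow> real) \<Rightarrow> bool" where
  "weight_seq M \<longleftrightarrow>
     (\<exists>\<mu>::nat \<Rightarrow> real. \<mu> 0 = 1 \<and> (\<forall>k. 0 < \<mu> k) \<and> mono \<mu> \<and>
        (\<forall>k. M k = (\<Prod>i=1..k. \<mu> i))) \<and>
     filterlim (\<lambda>k. root k (M k)) at_top sequentially"

text \<open>mu_(k+1) = M_(k+1)/M_k; quasianalytic iff sum of 1/mu_k diverges.\<close>
definition nonquasianalytic :: "(nat \<Rightarrow> real) \<Rightarrow> bool" where
  "nonquasianalytic M \<longleftrightarrow> summable (\<lambda>k. 1 / (M (Suc k) / M k))"

definition quasianalytic :: "(nat \<Rightarrow> real) \<Rightarrow> bool" where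
  "quasianalytic M \<longleftrightarrow> \<not> nonquasianalytic M"

definition moderate_growth :: "(nat \<Rightarrow> real) \<Rightarrow> bool" where
  "moderate_growth M \<longleftrightarrow> (\<exists>C>0. \<forall>j k. M (j + k) \<le> C ^ (j + k) * M j * M k)"

definition Lambda_Roumieu :: "(nat \<Rightarrow> real) \<Rightarrow> (nat \<Rightarrow> complex) set" where
  "Lambda_Roumieu M = {c. \<exists>\<rho>>0. bdd_above (range (\<lambda>k. norm (c k) / (\<rho> ^ k * M k)))}"

definition log_convex_seq :: "(nat \<Rightarrow> real) \<Rightarrow> bool" where
  "log_convex_seq a \<longleftrightarrow> (\<forall>k. (a (Suc k))\<^sup>2 \<le> a k * a (Suc (Suc k)))"

definition LL :: "(nat \<Rightarrow> real) \<Rightarrow> (nat \<Rightarrow> real) set" where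
  "LL M = {N. weight_seq N \<and> nonquasianalytic N \<and> (\<forall>k. M k \<le> N k) \<and>
              log_convex_seq (\<lambda>k. N k / fact k)}"

definition intersectable :: "(nat \<Rightarrow> real) \<Rightarrow> bool" where
  "intersectable M \<longleftrightarrow> weight_seq M \<and> quasianalytic M \<and>
     Lambda_Roumieu M = (\<Inter>N\<in>LL M. Lambda_Roumieu N)"

definition mg :: "(nat \<Rightarrow> real) \<Rightarrow> (nat \<Rightarrow> real) \<Rightarrow> ereal" where
  "mg M N = (SUP p \<in> {(j, k). 1 \<le> j + k}.
      ereal (root (fst p + snd p) (M (fst p + snd p) / (N (fst p) * N (snd p)))))"

end

theory Submission
  imports Defs
begin

text \<open>
  For N in LL M write n_k = N_k / k! and r_k = n_(k+1) / n_k. Log-convexity of n means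
  that r increases, and non-quasianalyticity of N says that the series of 1 / ((k + 1) r_k)
  converges; comparison with the harmonic series forces r_k \<longrightarrow> \<infinity>, hence n_k^(1/k) \<longrightarrow> \<infinity>.

  For (ii) let D \<ge> 1 be a moderate-growth constant of M and put
  N'_m = D^m m! n_(\<lfloor>m/2\<rfloor>) n_(\<lceil>m/2\<rceil>). Moderate growth of M and a! b! \<le> (a + b)! give
  M \<le> N'; log-convexity of n gives n_(\<lfloor>m/2\<rfloor>) n_(\<lceil>m/2\<rceil>) \<le> n_j n_k whenever j + k = m,
  whence N'_(j+k) \<le> (2D)^(j+k) N_j N_k. The quotients r of N' are D times those of N at halved
  indices, so N'_k / k! is again log-convex and N' non-quasianalytic, i.e. N' is in LL M.
\<close>

definition ratio :: "(nat \<Rightarrow> real) \<Rightarrow> nat \<Rightarrow> real" where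
  "ratio a k = a (Suc k) / a k"

lemma ratio_pos: "(\<And>k. 0 < a k) \<Longrightarrow> 0 < ratio a k"
  by (simp add: ratio_def)

lemma ratio_mult: "ratio (\<lambda>k. a k * b k) k = ratio a k * ratio b k"
  by (simp add: ratio_def)

lemma ratio_power: "D \<noteq> 0 \<Longrightarrow> ratio (\<lambda>k. D ^ k) k = D"
  by (simp add: ratio_def)

lemma ratio_fact: "ratio fact k = real k + 1"
  by (simp add: ratio_def del: of_nat_Suc)

lemma ratio_eq_Suc_mult_ratio_div_fact:
  "ratio a k = (real k + 1) * ratio (\<lambda>k. a k / fact k) k"
proof -
  have "ratio a k = ratio (\<lambda>k. a k / fact k * fact k) k" by simp
  also have "\<dots> = ratio (\<lambda>k. a k / fact k) k * (real k + 1)"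
    by (simp only: ratio_mult ratio_fact)
  finally show ?thesis by simp
qed

lemma nonquasianalytic_iff_summable_inverse_ratio:
  "nonquasianalytic N \<longleftrightarrow> summable (\<lambda>k. 1 / ratio N k)"
  by (simp add: nonquasianalytic_def ratio_def)

lemma log_convex_seq_iff_incseq_ratio:
  assumes "\<And>k. 0 < a k"
  shows "log_convex_seq a \<longleftrightarrow> incseq (ratio a)"
proof -
  have "ratio a k \<le> ratio a (Suc k) \<longleftrightarrow> (a (Suc k))\<^sup>2 \<le> a k * a (Suc (Suc k))" for k
    using assms[of k] assms[of "Suc k"]
    by (simp add: ratio_def divide_simps power2_eq_square mult.commute)
  then show ?thesis by (simp add: log_convex_seq_def incseq_Suc_iff)
qed

lemma log_convex_seq_cross_le:
  assumes "\<And>k. 0 < a k" "log_convex_seq a" "i \<le> l"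
  shows "a (Suc i) * a l \<le> a i * a (Suc l)"
proof -
  have "ratio a i \<le> ratio a l"
    using assms by (simp add: log_convex_seq_iff_incseq_ratio incseqD)
  then show ?thesis
    using assms(1)[of i] assms(1)[of l] by (simp add: ratio_def divide_simps mult.commute)
qed

definition mid_prod :: "(nat \<Rightarrow> real) \<Rightarrow> nat \<Rightarrow> real" where
  "mid_prod a m = a (m div 2) * a (m - m div 2)"

lemma mid_prod_pos: "(\<And>k. 0 < a k) \<Longrightarrow> 0 < mid_prod a m"
  by (simp add: mid_prod_def)

lemma ratio_mid_prod:
  assumes "\<And>k. 0 < a k"
  shows "ratio (mid_prod a) m = ratio a (m div 2)"
proof -
  have "\<exists>j. m = 2 * j \<or> m = Suc (2 * j)" by presburger
  then obtain j where "m = 2 * j \<or> m = Suc (2 * j)" by blast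
  then show ?thesis using assms[of j] assms[of "Suc j"] by (auto simp: ratio_def mid_prod_def)
qed

lemma mid_prod_add_le:
  assumes pos: "\<And>k. 0 < a k" and lc: "log_convex_seq a"
  shows "mid_prod a (j + k) \<le> a j * a k"
proof -
  have balanced: "mid_prod a (2 * i + d) \<le> a i * a (i + d)" for i d
  proof (induction d arbitrary: i rule: less_induct)
    case (less d)
    show ?case
    proof (cases "d < 2")
      case True
      then show ?thesis by (auto simp: mid_prod_def less_2_cases_iff)
    next
      case False
      then obtain e where d: "d = Suc (Suc e)"
        by (metis add_2_eq_Suc le_add_diff_inverse not_less)
      have "mid_prod a (2 * i + d) = mid_prod a (2 * Suc i + e)" by (simp add: d)
      also have "\<dots> \<le> a (Suc i) * a (Suc i + e)" using less.IH[of e "Suc i"] d by simp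
      also have "\<dots> \<le> a i * a (i + d)"
        using log_convex_seq_cross_le[OF pos lc, of i "Suc i + e"] by (simp add: d)
      finally show ?thesis .
    qed
  qed
  show ?thesis
  proof (cases "j \<le> k")
    case True
    then show ?thesis using balanced[of j "k - j"] by simp
  next
    case False
    then show ?thesis using balanced[of k "j - k"] by (simp add: add.commute mult.commute)
  qed
qed

lemma summable_comp_div2:
  fixes f :: "nat \<Rightarrow> real"
  assumes f: "summable f" and nonneg: "\<And>k. 0 \<le> f k"
  shows "summable (\<lambda>k. f (k div 2))"
proof (rule bounded_imp_summable)
  show "0 \<le> f (k div 2)" for k using nonneg by simp
  have doubled: "(\<Sum>k<2 * n. f (k div 2)) = 2 * (\<Sum>k<n. f k)" for n
  proof (induction n)
    case (Suc n)
    have "2 * Suc n = Suc (Suc (2 * n))" by simp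
    then show ?case using Suc by simp
  qed simp
  fix n
  have "(\<Sum>k\<le>n. f (k div 2)) \<le> (\<Sum>k<2 * Suc n. f (k div 2))"
    by (rule sum_mono2) (auto simp: nonneg)
  also have "\<dots> \<le> 2 * suminf f"
    using sum_le_suminf[OF f, of "{..<Suc n}"] nonneg by (simp add: doubled)
  finally show "(\<Sum>k\<le>n. f (k div 2)) \<le> 2 * suminf f" .
qed

lemma fact_add_eq_binomial_mult:
  "fact (a + b) = real ((a + b) choose a) * (fact a * fact b)"
proof -
  have "real (fact a * fact b * ((a + b) choose a)) = real (fact (a + b))"
    using binomial_fact_lemma[of a "a + b"] by simp
  then show ?thesis by (simp add: mult_ac)
qed

lemma fact_mult_fact_le_fact_add: "fact a * fact b \<le> (fact (a + b) :: real)"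
proof -
  have "fact a * fact b * 1 \<le> fact a * fact b * real ((a + b) choose a)"
    by (intro mult_left_mono) (simp_all add: Suc_leI)
  then show ?thesis by (simp add: fact_add_eq_binomial_mult mult.commute)
qed

lemma fact_add_le_pow2_mult: "fact (a + b) \<le> (2 ^ (a + b) * (fact a * fact b) :: real)"
proof -
  have "real ((a + b) choose a) \<le> 2 ^ (a + b)"
    using binomial_le_pow2 of_nat_le_iff by fastforce
  then show ?thesis unfolding fact_add_eq_binomial_mult by (simp add: mult_right_mono)
qed

lemma weight_seq_pos: "weight_seq N \<Longrightarrow> 0 < N k"
  by (auto simp: weight_seq_def prod_pos)

lemma weight_seq_0: "weight_seq N \<Longrightarrow> N 0 = 1"
  by (auto simp: weight_seq_def)

lemma weight_seq_1:
  assumes "weight_seq N"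
  shows "1 \<le> N 1"
proof -
  obtain \<mu> where "\<mu> 0 = 1" "mono \<mu>" "\<forall>k. N k = (\<Prod>i=1..k. \<mu> i)"
    using assms unfolding weight_seq_def by blast
  then show ?thesis using monoD[of \<mu> 0 1] by simp
qed

lemma weight_seq_root_at_top:
  "weight_seq N \<Longrightarrow> filterlim (\<lambda>k. root k (N k)) at_top sequentially"
  by (simp add: weight_seq_def)

lemma weight_seqI:
  assumes pos: "\<And>k. 0 < N k" and N0: "N 0 = 1" and N1: "1 \<le> N 1"
    and incseq: "incseq (ratio N)"
    and root: "filterlim (\<lambda>k. root k (N k)) at_top sequentially"
  shows "weight_seq N"
proof -
  define \<mu> where "\<mu> k = (if k = 0 then 1 else ratio N (k - 1))" for k
  have "\<mu> 0 = 1" by (simp add: \<mu>_def)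
  moreover have "N k = (\<Prod>i=1..k. \<mu> i)" for k
  proof (induction k)
    case (Suc k)
    have "(\<Prod>i=1..Suc k. \<mu> i) = \<mu> (Suc k) * (\<Prod>i=1..k. \<mu> i)"
      by (simp add: prod.nat_ivl_Suc')
    also have "\<dots> = ratio N k * N k" by (simp add: \<mu>_def Suc)
    also have "\<dots> = N (Suc k)" using pos[of k] by (simp add: ratio_def)
    finally show ?case by simp
  qed (simp add: N0)
  moreover have "mono \<mu>"
  proof (rule incseq_SucI)
    show "\<mu> k \<le> \<mu> (Suc k)" for k
      using N0 N1 incseq by (cases k) (auto simp: \<mu>_def ratio_def incseq_Suc_iff)
  qed
  moreover have "0 < \<mu> k" for k using pos by (simp add: \<mu>_def ratio_pos)
  ultimately show ?thesis
    unfolding weight_seq_def using root by blast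
qed

lemma incseq_ratio_if_log_convex_div_fact:
  assumes pos: "\<And>k. 0 < N k" and lc: "log_convex_seq (\<lambda>k. N k / fact k)"
  shows "incseq (ratio N)"
proof (rule incseq_SucI)
  fix k
  let ?n = "\<lambda>k. N k / fact k"
  have "ratio ?n k \<le> ratio ?n (Suc k)"
    using lc pos by (simp add: log_convex_seq_iff_incseq_ratio incseq_Suc_iff)
  moreover have "0 \<le> ratio ?n k" using pos by (simp add: ratio_pos less_imp_le)
  ultimately have "(real k + 1) * ratio ?n k \<le> (real (Suc k) + 1) * ratio ?n (Suc k)"
    by (intro mult_mono) auto
  then show "ratio N k \<le> ratio N (Suc k)"
    by (simp only: ratio_eq_Suc_mult_ratio_div_fact[of N])
qed

lemma incseq_at_top_if_summable_inverse:
  fixes r :: "nat \<Rightarrow> real"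
  assumes incseq: "incseq r" and pos: "\<And>k. 0 < r k"
    and summable: "summable (\<lambda>k. 1 / ((real k + 1) * r k))"
  shows "filterlim r at_top sequentially"
  unfolding filterlim_at_top
proof
  fix Z :: real
  have "\<exists>k. Z \<le> r k"
  proof (rule ccontr)
    assume "\<nexists>k. Z \<le> r k"
    then have below: "r k < Z" for k by (simp add: not_le)
    then have "0 < Z" using pos[of 0] by (meson less_trans)
    have "summable (\<lambda>k. 1 / ((real k + 1) * Z))"
    proof (rule summable_comparison_test'[OF summable])
      show "norm (1 / ((real k + 1) * Z)) \<le> 1 / ((real k + 1) * r k)" for k
        using below[of k] pos[of k] by (simp add: frac_le)
    qed
    then have "summable (\<lambda>k. Z * (1 / ((real k + 1) * Z)))" by (rule summable_mult)
    moreover have "Z * (1 / ((real k + 1) * Z)) = inverse (real (Suc k))" for k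
      using \<open>0 < Z\<close> by (simp add: divide_simps)
    ultimately have "summable (\<lambda>k. inverse (real (Suc k)))" by simp
    then show False
      using not_summable_harmonic[where 'a=real] summable_Suc_iff[of "\<lambda>k. inverse (real k)"]
      by simp
  qed
  then obtain k0 where "Z \<le> r k0" by blast
  then show "eventually (\<lambda>k. Z \<le> r k) sequentially"
    using incseq by (intro eventually_sequentiallyI[of k0]) (meson incseqD order_trans)
qed

lemma power_le_if_ratio_ge:
  assumes pos: "\<And>k. 0 < a k" and "0 \<le> B"
    and ratio: "\<And>k. k \<ge> k0 \<Longrightarrow> B \<le> ratio a k"
  shows "a k0 * B ^ i \<le> a (k0 + i)"
proof (induction i)
  case (Suc i)
  have "0 \<le> a k0 * B ^ i" using pos[of k0] \<open>0 \<le> B\<close> by simp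
  have "a k0 * B ^ Suc i = B * (a k0 * B ^ i)" by simp
  also have "\<dots> \<le> ratio a (k0 + i) * a (k0 + i)"
    using Suc ratio[of "k0 + i"] \<open>0 \<le> B\<close> \<open>0 \<le> a k0 * B ^ i\<close> by (intro mult_mono) auto
  also have "\<dots> = a (k0 + Suc i)" using pos[of "k0 + i"] by (simp add: ratio_def)
  finally show ?case .
qed simp

lemma root_at_top_if_ratio_at_top:
  assumes pos: "\<And>k. 0 < a k" and ratio: "filterlim (ratio a) at_top sequentially"
  shows "filterlim (\<lambda>k. root k (a k)) at_top sequentially"
  unfolding filterlim_at_top
proof
  fix Z :: real
  define A where "A = max Z 1"
  have A: "1 \<le> A" "Z \<le> A" by (auto simp: A_def)
  obtain k0 where k0: "\<And>k. k \<ge> k0 \<Longrightarrow> 2 * A \<le> ratio a k"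
    using ratio unfolding filterlim_at_top eventually_sequentially by blast
  \<comment> \<open>\<open>a\<^sub>k \<ge> c (2A)\<^sup>k\<close> for \<open>k \<ge> k0\<close>, and \<open>root k c \<longrightarrow> 1\<close> eventually exceeds \<open>1/2\<close>\<close>
  have grow: "a k0 * (2 * A) ^ i \<le> a (k0 + i)" for i
    using pos k0 A by (intro power_le_if_ratio_ge) auto
  define c where "c = a k0 / (2 * A) ^ k0"
  have "0 < c" using pos A by (simp add: c_def)
  then have "eventually (\<lambda>k. 1 / 2 < root k c) sequentially"
    using order_tendstoD(1)[OF LIMSEQ_root_const[OF \<open>0 < c\<close>], of "1 / 2"] by simp
  moreover have "eventually (\<lambda>k. max k0 1 \<le> k) sequentially" by (rule eventually_ge_at_top)
  ultimately show "eventually (\<lambda>k. Z \<le> root k (a k)) sequentially"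
  proof eventually_elim
    case (elim k)
    then have k: "k0 \<le> k" "0 < k" by auto
    have "c * (2 * A) ^ k = a k0 * (2 * A) ^ (k - k0)"
      using k A by (simp add: c_def power_diff)
    also have "\<dots> \<le> a k" using grow[of "k - k0"] k by simp
    finally have lower: "c * (2 * A) ^ k \<le> a k" .
    have "Z \<le> 1 / 2 * (2 * A)" using A by simp
    also have "\<dots> \<le> root k c * (2 * A)" using elim A by (intro mult_right_mono) auto
    also have "\<dots> = root k (c * (2 * A) ^ k)"
      using k A by (simp add: real_root_mult real_root_power_cancel)
    also have "\<dots> \<le> root k (a k)" using lower k by (simp add: real_root_le_mono)
    finally show ?case .
  qed
qed

lemma root_div_fact_at_top_if_nonquasianalytic:
  assumes pos: "\<And>k. 0 < N k" and nq: "nonquasianalytic N"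
    and lc: "log_convex_seq (\<lambda>k. N k / fact k)"
  shows "filterlim (\<lambda>k. root k (N k / fact k)) at_top sequentially"
proof -
  let ?n = "\<lambda>k. N k / fact k"
  have npos: "0 < ?n k" for k using pos by simp
  have "incseq (ratio ?n)" using lc npos by (simp add: log_convex_seq_iff_incseq_ratio)
  moreover have "summable (\<lambda>k. 1 / ((real k + 1) * ratio ?n k))"
    using nq by (simp add: nonquasianalytic_iff_summable_inverse_ratio
        flip: ratio_eq_Suc_mult_ratio_div_fact)
  ultimately have "filterlim (ratio ?n) at_top sequentially"
    using npos by (intro incseq_at_top_if_summable_inverse ratio_pos)
  then show ?thesis using npos by (rule root_at_top_if_ratio_at_top[rotated])
qed

lemma moderate_growthE:
  assumes "moderate_growth M" and nonneg: "\<And>k. 0 \<le> M k"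
  obtains D where "1 \<le> D" "\<And>j k. M (j + k) \<le> D ^ (j + k) * M j * M k"
proof -
  obtain C where C: "0 < C" "\<And>j k. M (j + k) \<le> C ^ (j + k) * M j * M k"
    using assms(1) unfolding moderate_growth_def by blast
  have "M (j + k) \<le> max C 1 ^ (j + k) * M j * M k" for j k
  proof -
    have "C ^ (j + k) \<le> max C 1 ^ (j + k)" using C(1) by (intro power_mono) auto
    then have "C ^ (j + k) * (M j * M k) \<le> max C 1 ^ (j + k) * (M j * M k)"
      using nonneg by (intro mult_right_mono) auto
    then show ?thesis using C(2)[of j k] by (simp add: mult.assoc)
  qed
  then show thesis by (intro that[of "max C 1"]) auto
qed

lemma mg_le_if_bound:
  assumes "0 \<le> c" and pos: "\<And>k. 0 < N k"
    and bound: "\<And>j k. P (j + k) \<le> c ^ (j + k) * N j * N k"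
  shows "mg P N \<le> ereal c"
  unfolding mg_def
proof (rule SUP_least)
  fix p :: "nat \<times> nat"
  assume "p \<in> {(j, k). 1 \<le> j + k}"
  then obtain j k where p: "p = (j, k)" and "1 \<le> j + k" by blast
  then have "0 < j + k" by linarith
  have "P (j + k) / (N j * N k) \<le> c ^ (j + k)"
    using bound[of j k] pos[of j] pos[of k] by (simp add: divide_simps)
  then have "root (j + k) (P (j + k) / (N j * N k)) \<le> root (j + k) (c ^ (j + k))"
    using \<open>0 < j + k\<close> by (rule real_root_le_mono[rotated])
  also have "\<dots> = c" using \<open>0 < j + k\<close> \<open>0 \<le> c\<close> by (rule real_root_power_cancel)
  finally show "ereal (root (fst p + snd p) (P (fst p + snd p) / (N (fst p) * N (snd p))))
      \<le> ereal c" by (simp add: p)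
qed

definition mg_companion :: "real \<Rightarrow> (nat \<Rightarrow> real) \<Rightarrow> nat \<Rightarrow> real" where
  "mg_companion D N m = D ^ m * fact m * mid_prod (\<lambda>k. N k / fact k) m"

lemma mg_companion_pos: "0 < D \<Longrightarrow> (\<And>k. 0 < N k) \<Longrightarrow> 0 < mg_companion D N m"
  by (simp add: mg_companion_def mid_prod_pos)

lemma mg_companion_div_fact:
  "mg_companion D N m / fact m = D ^ m * mid_prod (\<lambda>k. N k / fact k) m"
  by (simp add: mg_companion_def)

lemma ratio_mg_companion_div_fact:
  assumes "D \<noteq> 0" and "\<And>k. 0 < N k"
  shows "ratio (\<lambda>m. mg_companion D N m / fact m) m
    = D * ratio (\<lambda>k. N k / fact k) (m div 2)"
proof -
  have "0 < N k / fact k" for k using assms(2) by simp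
  then show ?thesis
    by (simp only: mg_companion_div_fact ratio_mult ratio_power[OF assms(1)] ratio_mid_prod)
qed

lemma log_convex_mg_companion_div_fact:
  assumes "0 < D" and pos: "\<And>k. 0 < N k" and lc: "log_convex_seq (\<lambda>k. N k / fact k)"
  shows "log_convex_seq (\<lambda>m. mg_companion D N m / fact m)"
proof -
  let ?n = "\<lambda>k. N k / fact k"
  have "incseq (ratio ?n)" using lc pos by (simp add: log_convex_seq_iff_incseq_ratio)
  then have "incseq (\<lambda>m. D * ratio ?n (m div 2))"
    using \<open>0 < D\<close> by (intro incseq_SucI mult_left_mono) (auto intro: incseqD div_le_mono)
  moreover have "0 < mg_companion D N m / fact m" for m
    using assms by (simp add: mg_companion_div_fact mid_prod_pos)
  moreover have "ratio (\<lambda>m. mg_companion D N m / fact m) = (\<lambda>m. D * ratio ?n (m div 2))"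
    using \<open>0 < D\<close> pos by (intro ext ratio_mg_companion_div_fact) auto
  ultimately show ?thesis by (simp add: log_convex_seq_iff_incseq_ratio)
qed

lemma mg_companion_ge:
  assumes "0 \<le> D" and nonneg: "\<And>k. 0 \<le> M k" and below: "\<And>k. M k \<le> N k"
    and mg: "\<And>j k. M (j + k) \<le> D ^ (j + k) * M j * M k"
  shows "M m \<le> mg_companion D N m"
proof -
  define a where "a = m div 2"
  define b where "b = m - m div 2"
  have m: "m = a + b" by (simp add: a_def b_def)
  have N_nonneg: "0 \<le> N k" for k using nonneg below by (meson order_trans)
  then have "0 \<le> mid_prod (\<lambda>k. N k / fact k) m" by (simp add: mid_prod_def)
  have "M m \<le> D ^ m * M a * M b" using mg[of a b] m by simp
  also have "\<dots> \<le> D ^ m * N a * N b"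
    using assms N_nonneg by (intro mult_mono mult_nonneg_nonneg) auto
  also have "\<dots> = D ^ m * (fact a * fact b) * mid_prod (\<lambda>k. N k / fact k) m"
    by (simp add: mid_prod_def a_def b_def)
  also have "\<dots> \<le> D ^ m * fact m * mid_prod (\<lambda>k. N k / fact k) m"
    using fact_mult_fact_le_fact_add[of a b] m \<open>0 \<le> D\<close> \<open>0 \<le> mid_prod _ m\<close>
    by (intro mult_right_mono mult_left_mono) auto
  finally show ?thesis by (simp add: mg_companion_def)
qed

lemma mg_companion_add_le:
  assumes "0 \<le> D" and pos: "\<And>k. 0 < N k" and lc: "log_convex_seq (\<lambda>k. N k / fact k)"
  shows "mg_companion D N (j + k) \<le> (2 * D) ^ (j + k) * N j * N k"
proof -
  let ?n = "\<lambda>k. N k / fact k"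
  have "mg_companion D N (j + k) = D ^ (j + k) * fact (j + k) * mid_prod ?n (j + k)"
    by (simp add: mg_companion_def)
  also have "\<dots> \<le> D ^ (j + k) * (2 ^ (j + k) * (fact j * fact k)) * (?n j * ?n k)"
    using fact_add_le_pow2_mult[of j k] mid_prod_add_le[of ?n j k] pos lc \<open>0 \<le> D\<close>
    by (intro mult_mono mult_left_mono mid_prod_pos[THEN less_imp_le]) auto
  also have "\<dots> = (2 * D) ^ (j + k) * N j * N k"
    by (simp add: power_mult_distrib mult_ac)
  finally show ?thesis .
qed

lemma nonquasianalytic_mg_companion:
  assumes "1 \<le> D" and pos: "\<And>k. 0 < N k" and nq: "nonquasianalytic N"
  shows "nonquasianalytic (mg_companion D N)"
  unfolding nonquasianalytic_iff_summable_inverse_ratio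
proof (rule summable_comparison_test'[OF summable_comp_div2])
  let ?n = "\<lambda>k. N k / fact k"
  show "summable (\<lambda>j. 1 / ratio N j)"
    using nq by (simp add: nonquasianalytic_iff_summable_inverse_ratio)
  show "0 \<le> 1 / ratio N j" for j using pos by (simp add: ratio_pos less_imp_le)
  fix k :: nat
  let ?j = "k div 2"
  have "real ?j + 1 \<le> real k + 1" by simp
  also have "\<dots> \<le> (real k + 1) * D"
    using mult_left_mono[OF \<open>1 \<le> D\<close>, of "real k + 1"] by simp
  finally have "(real ?j + 1) * ratio ?n ?j \<le> (real k + 1) * D * ratio ?n ?j"
    using pos ratio_pos[of ?n ?j] by (intro mult_right_mono) auto
  moreover have "ratio (mg_companion D N) k = (real k + 1) * (D * ratio ?n ?j)"
    using \<open>1 \<le> D\<close> pos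
    by (simp add: ratio_eq_Suc_mult_ratio_div_fact[of "mg_companion D N"]
        ratio_mg_companion_div_fact)
  ultimately show "norm (1 / ratio (mg_companion D N) k) \<le> 1 / ratio N ?j"
    using pos ratio_pos[of ?n ?j] \<open>1 \<le> D\<close>
    by (simp add: ratio_eq_Suc_mult_ratio_div_fact[of N ?j] frac_le mult_ac)
qed

lemma LL_pos: "N \<in> LL M \<Longrightarrow> 0 < N k"
  by (simp add: LL_def weight_seq_pos)

lemma mg_companion_in_LL:
  assumes M: "weight_seq M" and N: "N \<in> LL M" and "1 \<le> D"
    and mg: "\<And>j k. M (j + k) \<le> D ^ (j + k) * M j * M k"
  shows "mg_companion D N \<in> LL M"
proof -
  let ?N' = "mg_companion D N"
  have pos: "0 < N k" for k using N by (rule LL_pos)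
  have lc: "log_convex_seq (\<lambda>k. N k / fact k)" and nq: "nonquasianalytic N"
    and ws: "weight_seq N" and below: "M k \<le> N k" for k
    using N by (simp_all add: LL_def)
  have D: "0 < D" using \<open>1 \<le> D\<close> by simp
  have pos': "0 < ?N' k" for k using D pos by (rule mg_companion_pos)
  have below': "M k \<le> ?N' k" for k
    using D M below mg by (intro mg_companion_ge) (auto simp: weight_seq_pos less_imp_le)
  have lc': "log_convex_seq (\<lambda>k. ?N' k / fact k)"
    using D pos lc by (rule log_convex_mg_companion_div_fact)
  have "weight_seq ?N'"
  proof (rule weight_seqI[OF pos'])
    show "?N' 0 = 1" using ws by (simp add: mg_companion_def mid_prod_def weight_seq_0)
    have "1 * 1 \<le> D * N 1" using \<open>1 \<le> D\<close> weight_seq_1[OF ws] by (intro mult_mono) auto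
    then show "1 \<le> ?N' 1" using ws by (simp add: mg_companion_def mid_prod_def weight_seq_0)
    show "incseq (ratio ?N')" using pos' lc' by (rule incseq_ratio_if_log_convex_div_fact)
    show "filterlim (\<lambda>k. root k (?N' k)) at_top sequentially"
    proof (rule filterlim_at_top_mono[OF weight_seq_root_at_top[OF M]])
      show "\<forall>\<^sub>F k in sequentially. root k (M k) \<le> root k (?N' k)"
      proof (rule always_eventually, rule allI)
        show "root k (M k) \<le> root k (?N' k)" for k
          using below'[of k] by (cases "k = 0") (auto intro: real_root_le_mono)
      qed
    qed
  qed
  moreover have "nonquasianalytic ?N'"
    using \<open>1 \<le> D\<close> pos nq by (rule nonquasianalytic_mg_companion)
  ultimately show ?thesis using below' lc' by (simp add: LL_def)
qed

theorem lemma6p3: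
  fixes M :: "nat \<Rightarrow> real"
  assumes "weight_seq M" and "quasianalytic M" and "intersectable M"
  shows "(\<forall>N\<in>LL M. filterlim (\<lambda>k. root k (N k / fact k)) at_top sequentially)
       \<and> (moderate_growth M \<longrightarrow> (\<forall>N\<in>LL M. \<exists>N'\<in>LL M. mg N' N < \<infinity>))"
proof (intro conjI impI ballI)
  fix N assume N: "N \<in> LL M"
  then show "filterlim (\<lambda>k. root k (N k / fact k)) at_top sequentially"
    using LL_pos[OF N] by (intro root_div_fact_at_top_if_nonquasianalytic) (auto simp: LL_def)
next
  fix N assume "moderate_growth M" and N: "N \<in> LL M"
  then obtain D where D: "1 \<le> D" and mg: "\<And>j k. M (j + k) \<le> D ^ (j + k) * M j * M k"
    using weight_seq_pos[OF assms(1)] by (elim moderate_growthE) (auto simp: less_imp_le)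
  have "mg (mg_companion D N) N \<le> ereal (2 * D)"
    using D LL_pos[OF N] N by (intro mg_le_if_bound mg_companion_add_le) (auto simp: LL_def)
  then have "mg (mg_companion D N) N < \<infinity>" by (rule le_less_trans) simp
  then show "\<exists>N'\<in>LL M. mg N' N < \<infinity>"
    using mg_companion_in_LL[OF assms(1) N D mg] by blast
qed

end
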